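(* Let $u\in\mathrm{BMOA}(\mathbb T)$ and $s>0$ with $E_H(s)+E_K(s)\neq\{0\}$. Then exactly one of the following holds: (1) $u\not\perp E_H(s)$ and $E_K(s)=E_H(s)\cap u^\perp$; (2) $u\not\perp E_K(s)$ and $E_H(s)=E_K(s)\cap u^\perp$.
   Context: $\mathcal H^2=\mathcal H^2(\mathbb T)$, $P$ the Szegő projection, $S$ the shift $Sf(z)=zf(z)$ with adjoint $S^*$. For $u\in\mathrm{BMOA}(\mathbb T)$: $H_uf=P(u\overline f)$ (anti-linear Hankel operator) and $K_u:=H_uS=S^*H_u=H_{S^*u}$. $E_H(s)=\operatorname{Ker}(H_u^2-s^2I)$, $E_K(s)=\operatorname{Ker}(K_u^2-s^2I)$. Note $K_u^2=H_u^2-(\cdot,u)u$. *)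

theory Defs
  imports "HOL-Analysis.Analysis"
begin

text \<open>The Hardy space H^2(T) is modelled through Fourier coefficients:
  f(z) = sum_{n>=0} f n z^n, with (f n) square summable.\<close>

definition H2 :: "(nat \<Rightarrow> complex) set" where
  "H2 = {f. summable (\<lambda>n. (cmod (f n))\<^sup>2)}"

definition h2_inner :: "(nat \<Rightarrow> complex) \<Rightarrow> (nat \<Rightarrow> complex) \<Rightarrow> complex" where
  "h2_inner f g = (\<Sum>n. f n * cnj (g n))"

text \<open>Anti-linear Hankel operator H_u f = P(u conj f); in coefficients
  (H_u f)_n = sum_k u_(n+k) conj(f_k).\<close>
definition hankel :: "(nat \<Rightarrow> complex) \<Rightarrow> (nat \<Rightarrow> complex) \<Rightarrow> (nat \<Rightarrow> complex)" where
  "hankel u f = (\<lambda>n. \<Sum>k. u (n + k) * cnj (f k))"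

definition shift_adj :: "(nat \<Rightarrow> complex) \<Rightarrow> (nat \<Rightarrow> complex)" where
  "shift_adj u = (\<lambda>n. u (Suc n))"

text \<open>K_u = H_u S = S^* H_u = H_{S^* u}.\<close>
definition shifted_hankel :: "(nat \<Rightarrow> complex) \<Rightarrow> (nat \<Rightarrow> complex) \<Rightarrow> (nat \<Rightarrow> complex)" where
  "shifted_hankel u = hankel (shift_adj u)"

text \<open>BMOA(T): by the Nehari--Fefferman theorem, the symbols u in H^2 whose
  Hankel operator H_u is bounded on H^2.\<close>
definition BMOA :: "(nat \<Rightarrow> complex) set" where
  "BMOA = {u. u \<in> H2 \<and> (\<exists>C. \<forall>f\<in>H2. hankel u f \<in> H2 \<and>
              (\<Sum>n. (cmod (hankel u f n))\<^sup>2) \<le> C * (\<Sum>n. (cmod (f n))\<^sup>2))}"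

definition E_H :: "(nat \<Rightarrow> complex) \<Rightarrow> real \<Rightarrow> (nat \<Rightarrow> complex) set" where
  "E_H u s = {f \<in> H2. hankel u (hankel u f) = (\<lambda>n. complex_of_real (s\<^sup>2) * f n)}"

definition E_K :: "(nat \<Rightarrow> complex) \<Rightarrow> real \<Rightarrow> (nat \<Rightarrow> complex) set" where
  "E_K u s = {f \<in> H2. shifted_hankel u (shifted_hankel u f) = (\<lambda>n. complex_of_real (s\<^sup>2) * f n)}"

definition orth_to :: "(nat \<Rightarrow> complex) \<Rightarrow> (nat \<Rightarrow> complex) set \<Rightarrow> bool" where
  "orth_to u E \<longleftrightarrow> (\<forall>f\<in>E. h2_inner f u = 0)"

definition orth_compl :: "(nat \<Rightarrow> complex) \<Rightarrow> (nat \<Rightarrow> complex) set" where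
  "orth_compl u = {f \<in> H2. h2_inner f u = 0}"

end

theory Submission imports Defs begin

text \<open>Two facts drive the proof. First, H_u^2 = K_u^2 + (., u) u, so E_H(s) and E_K(s)
  coincide inside u^perp; hence E_K(s) = E_H(s) \<inter> u^perp holds exactly when u is orthogonal
  to E_K(s), and symmetrically. Second, H_u is symmetric: (H_u a, b) = (H_u b, a). For f in
  E_H(s) and g in E_K(s) symmetry gives (K_u^2 f, g) = s^2 (f, g), while the first identity
  gives (K_u^2 f, g) = s^2 (f, g) - (f, u)(u, g); so (f, u)(u, g) = 0 and u is orthogonal to at
  least one of the two eigenspaces. If it were orthogonal to both, they would coincide and be
  invariant under H_u and K_u = S^* H_u; as H_u is invertible on E_H(s), the Taylor coefficients
  of its elements then vanish one after the other, so E_H(s) + E_K(s) = {0}.\<close>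

section \<open>The space H^2 and its inner product\<close>

definition h2_norm2 :: "(nat \<Rightarrow> complex) \<Rightarrow> real" where
  "h2_norm2 f = (\<Sum>n. (cmod (f n))\<^sup>2)"

definition h2_truncate :: "nat \<Rightarrow> (nat \<Rightarrow> complex) \<Rightarrow> (nat \<Rightarrow> complex)" where
  "h2_truncate N f = (\<lambda>n. if n < N then f n else 0)"

lemma H2_summable_norm2: "f \<in> H2 \<Longrightarrow> summable (\<lambda>n. (cmod (f n))\<^sup>2)"
  by (simp add: H2_def)

lemma h2_norm2_nonneg: "f \<in> H2 \<Longrightarrow> 0 \<le> h2_norm2 f"
  unfolding h2_norm2_def by (intro suminf_nonneg H2_summable_norm2) auto

lemma H2_summable_norm_mult:
  assumes "f \<in> H2" "g \<in> H2"
  shows "summable (\<lambda>n. cmod (f n) * cmod (g n))"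
proof (rule summable_comparison_test')
  show "summable (\<lambda>n. (cmod (f n))\<^sup>2 + (cmod (g n))\<^sup>2)"
    using assms by (intro summable_add H2_summable_norm2)
  show "norm (cmod (f n) * cmod (g n)) \<le> (cmod (f n))\<^sup>2 + (cmod (g n))\<^sup>2" for n
  proof -
    have "cmod (f n) * cmod (g n) \<le> (cmod (f n))\<^sup>2 + (cmod (g n))\<^sup>2"
      using sum_squares_bound[of "cmod (f n)" "cmod (g n)"]
        mult_nonneg_nonneg[OF norm_ge_zero[of "f n"] norm_ge_zero[of "g n"]] by linarith
    then show ?thesis by simp
  qed
qed

lemma H2_summable_mult_cnj:
  assumes "f \<in> H2" "g \<in> H2"
  shows "summable (\<lambda>n. f n * cnj (g n))"
  by (rule summable_norm_cancel) (use H2_summable_norm_mult[OF assms] in \<open>simp add: norm_mult\<close>)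

lemma H2_shift: "f \<in> H2 \<Longrightarrow> (\<lambda>n. f (n + k)) \<in> H2"
  unfolding H2_def using summable_iff_shift[of "\<lambda>n. (cmod (f n))\<^sup>2" k] by simp

lemma H2_zero: "(\<lambda>n. 0) \<in> H2"
  unfolding H2_def by simp

lemma H2_mult: "f \<in> H2 \<Longrightarrow> (\<lambda>n. c * f n) \<in> H2"
  unfolding H2_def by (simp add: norm_mult power_mult_distrib summable_mult)

lemma H2_diff:
  assumes "f \<in> H2" "g \<in> H2"
  shows "(\<lambda>n. f n - g n) \<in> H2"
  unfolding H2_def mem_Collect_eq
proof (rule summable_comparison_test')
  show "summable (\<lambda>n. 2 * (cmod (f n))\<^sup>2 + 2 * (cmod (g n))\<^sup>2)"
    using assms by (intro summable_add summable_mult H2_summable_norm2)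
  show "norm ((cmod (f n - g n))\<^sup>2) \<le> 2 * (cmod (f n))\<^sup>2 + 2 * (cmod (g n))\<^sup>2" for n
  proof -
    have "(cmod (f n - g n))\<^sup>2 \<le> (cmod (f n) + cmod (g n))\<^sup>2"
      by (simp add: power_mono norm_triangle_ineq4)
    also have "\<dots> \<le> 2 * (cmod (f n))\<^sup>2 + 2 * (cmod (g n))\<^sup>2"
      using sum_squares_bound[of "cmod (f n)" "cmod (g n)"] by (simp add: power2_sum)
    finally show ?thesis by simp
  qed
qed

lemma H2_truncate: "h2_truncate N f \<in> H2"
  unfolding H2_def h2_truncate_def mem_Collect_eq
  by (rule summable_comparison_test'[where N = N and g = "\<lambda>_. 0"]) auto

lemma h2_inner_truncate: "h2_inner f (h2_truncate N g) = (\<Sum>n<N. f n * cnj (g n))"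
  unfolding h2_inner_def h2_truncate_def by (subst suminf_finite[of "{..<N}"]) auto

lemma h2_inner_cnj_commute:
  assumes "f \<in> H2" "g \<in> H2"
  shows "cnj (h2_inner f g) = h2_inner g f"
  using sums_unique[OF sums_cnj[THEN iffD2, OF summable_sums[OF H2_summable_mult_cnj[OF assms]]]]
  unfolding h2_inner_def by (simp add: mult.commute)

lemma h2_inner_diff_left:
  assumes "f \<in> H2" "g \<in> H2" "h \<in> H2"
  shows "h2_inner (\<lambda>n. f n - g n) h = h2_inner f h - h2_inner g h"
  unfolding h2_inner_def
  by (subst suminf_diff[OF H2_summable_mult_cnj[OF assms(1,3)] H2_summable_mult_cnj[OF assms(2,3)]])
     (simp add: algebra_simps)

lemma h2_inner_mult_left:
  assumes "f \<in> H2" "h \<in> H2"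
  shows "h2_inner (\<lambda>n. c * f n) h = c * h2_inner f h"
  unfolding h2_inner_def
  by (subst suminf_mult[OF H2_summable_mult_cnj[OF assms], symmetric]) (simp add: algebra_simps)

lemma Cauchy_Schwarz_suminf:
  fixes a b :: "nat \<Rightarrow> real"
  assumes "summable (\<lambda>n. (a n)\<^sup>2)" "summable (\<lambda>n. (b n)\<^sup>2)" "summable (\<lambda>n. a n * b n)"
  shows "(\<Sum>n. a n * b n)\<^sup>2 \<le> (\<Sum>n. (a n)\<^sup>2) * (\<Sum>n. (b n)\<^sup>2)"
proof (rule LIMSEQ_le)
  show "(\<lambda>N. (\<Sum>n<N. a n * b n)\<^sup>2) \<longlonglongrightarrow> (\<Sum>n. a n * b n)\<^sup>2"
    by (intro tendsto_power summable_LIMSEQ assms)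
  show "(\<lambda>N. (\<Sum>n<N. (a n)\<^sup>2) * (\<Sum>n<N. (b n)\<^sup>2)) \<longlonglongrightarrow> (\<Sum>n. (a n)\<^sup>2) * (\<Sum>n. (b n)\<^sup>2)"
    by (intro tendsto_mult summable_LIMSEQ assms)
  show "\<exists>N. \<forall>n\<ge>N. (\<Sum>n<n. a n * b n)\<^sup>2 \<le> (\<Sum>n<n. (a n)\<^sup>2) * (\<Sum>n<n. (b n)\<^sup>2)"
    by (auto intro: Cauchy_Schwarz_ineq_sum)
qed

lemma h2_inner_Cauchy_Schwarz:
  assumes "f \<in> H2" "g \<in> H2"
  shows "(cmod (h2_inner f g))\<^sup>2 \<le> h2_norm2 f * h2_norm2 g"
proof -
  have "cmod (h2_inner f g) \<le> (\<Sum>n. cmod (f n) * cmod (g n))"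
    unfolding h2_inner_def using summable_norm[of "\<lambda>n. f n * cnj (g n)"] H2_summable_norm_mult[OF assms]
    by (simp add: norm_mult)
  then have "(cmod (h2_inner f g))\<^sup>2 \<le> (\<Sum>n. cmod (f n) * cmod (g n))\<^sup>2"
    by (simp add: power_mono)
  also have "\<dots> \<le> h2_norm2 f * h2_norm2 g"
    unfolding h2_norm2_def
    using Cauchy_Schwarz_suminf[OF H2_summable_norm2[OF assms(1)] H2_summable_norm2[OF assms(2)]
        H2_summable_norm_mult[OF assms]] .
  finally show ?thesis .
qed

lemma h2_norm2_truncate_tendsto_0:
  assumes b: "b \<in> H2"
  shows "(\<lambda>N. h2_norm2 (\<lambda>n. b n - h2_truncate N b n)) \<longlonglongrightarrow> 0"
proof -
  have tail: "h2_norm2 (\<lambda>n. b n - h2_truncate N b n) = h2_norm2 b - (\<Sum>n<N. (cmod (b n))\<^sup>2)" for N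
  proof -
    have "h2_norm2 (\<lambda>n. b n - h2_truncate N b n) = (\<Sum>n. (cmod (b (n + N)))\<^sup>2)"
      unfolding h2_norm2_def
      using suminf_split_initial_segment[OF H2_summable_norm2[OF H2_diff[OF b H2_truncate[of N b]]], where k = N]
      by (simp add: h2_truncate_def)
    moreover have "h2_norm2 b = (\<Sum>n. (cmod (b (n + N)))\<^sup>2) + (\<Sum>n<N. (cmod (b n))\<^sup>2)"
      unfolding h2_norm2_def by (rule suminf_split_initial_segment[OF H2_summable_norm2[OF b]])
    ultimately show ?thesis by simp
  qed
  have "(\<lambda>N. h2_norm2 b - (\<Sum>n<N. (cmod (b n))\<^sup>2)) \<longlonglongrightarrow> h2_norm2 b - h2_norm2 b"
    unfolding h2_norm2_def by (intro tendsto_diff tendsto_const summable_LIMSEQ H2_summable_norm2 b)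
  then show ?thesis unfolding tail by simp
qed

section \<open>Hankel operators\<close>

lemma hankel_summable:
  assumes "u \<in> H2" "f \<in> H2"
  shows "summable (\<lambda>k. u (n + k) * cnj (f k))"
  using H2_summable_mult_cnj[OF H2_shift[OF assms(1), of n] assms(2)] by (simp add: add.commute)

lemma hankel_zero: "hankel u (\<lambda>n. 0) = (\<lambda>n. 0)"
  unfolding hankel_def by simp

lemma hankel_diff:
  assumes "u \<in> H2" "f \<in> H2" "g \<in> H2"
  shows "hankel u (\<lambda>n. f n - g n) = (\<lambda>n. hankel u f n - hankel u g n)"
  unfolding hankel_def
  by (rule ext, subst suminf_diff[OF hankel_summable[OF assms(1,2)] hankel_summable[OF assms(1,3)]])
     (simp add: algebra_simps)

lemma hankel_mult:
  assumes "u \<in> H2" "f \<in> H2"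
  shows "hankel u (\<lambda>n. c * f n) = (\<lambda>n. cnj c * hankel u f n)"
  unfolding hankel_def
  by (rule ext, subst suminf_mult[OF hankel_summable[OF assms], symmetric]) (simp add: algebra_simps)

lemma cnj_hankel_0:
  assumes "u \<in> H2" "f \<in> H2"
  shows "cnj (hankel u f 0) = h2_inner f u"
proof -
  have "(\<lambda>k. u k * cnj (f k)) sums hankel u f 0"
    using summable_sums[OF hankel_summable[OF assms, of 0]] by (simp add: hankel_def)
  then show ?thesis
    using sums_unique[OF sums_cnj[THEN iffD2]] unfolding h2_inner_def by (simp add: mult.commute)
qed

lemma shifted_hankel_apply: "shifted_hankel u f n = hankel u f (Suc n)"
  unfolding shifted_hankel_def hankel_def shift_adj_def by simp

lemma BMOA_H2: "u \<in> BMOA \<Longrightarrow> u \<in> H2"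
  by (simp add: BMOA_def)

lemma BMOA_hankel_H2: "u \<in> BMOA \<Longrightarrow> f \<in> H2 \<Longrightarrow> hankel u f \<in> H2"
  unfolding BMOA_def by blast

lemma BMOA_hankel_bounded: "u \<in> BMOA \<Longrightarrow> \<exists>C. \<forall>f\<in>H2. h2_norm2 (hankel u f) \<le> C * h2_norm2 f"
  unfolding BMOA_def h2_norm2_def by blast

lemma shift_adj_BMOA:
  assumes u: "u \<in> BMOA"
  shows "shift_adj u \<in> BMOA"
proof -
  obtain C where C: "\<forall>f\<in>H2. h2_norm2 (hankel u f) \<le> C * h2_norm2 f"
    using BMOA_hankel_bounded[OF u] by blast
  have "hankel (shift_adj u) f \<in> H2 \<and> h2_norm2 (hankel (shift_adj u) f) \<le> C * h2_norm2 f"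
    if f: "f \<in> H2" for f
  proof -
    have hf: "hankel u f \<in> H2" using BMOA_hankel_H2[OF u f] .
    have eq: "hankel (shift_adj u) f = (\<lambda>n. hankel u f (n + 1))"
      using shifted_hankel_apply[of u f] unfolding shifted_hankel_def by auto
    have "h2_norm2 (\<lambda>n. hankel u f (n + 1)) \<le> h2_norm2 (hankel u f)"
      using suminf_split_head[OF H2_summable_norm2[OF hf]] unfolding h2_norm2_def by simp
    then show ?thesis
      using H2_shift[OF hf, of 1] C f unfolding eq by force
  qed
  moreover have "shift_adj u \<in> H2"
    using H2_shift[OF BMOA_H2[OF u], of 1] unfolding shift_adj_def by simp
  ultimately show ?thesis unfolding BMOA_def h2_norm2_def by blast
qed

lemma h2_inner_hankel_truncate:
  assumes u: "u \<in> H2" and a: "a \<in> H2"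
  shows "h2_inner (hankel u a) (h2_truncate N b) = h2_inner (hankel u (h2_truncate N b)) a"
proof -
  have "h2_inner (hankel u a) (h2_truncate N b) = (\<Sum>n<N. \<Sum>k. u (n + k) * cnj (a k) * cnj (b n))"
    unfolding h2_inner_truncate hankel_def by (intro sum.cong refl suminf_mult2 hankel_summable u a)
  also have "\<dots> = (\<Sum>k. \<Sum>n<N. u (n + k) * cnj (a k) * cnj (b n))"
    by (intro suminf_sum[symmetric] summable_mult2 hankel_summable u a)
  also have "\<dots> = (\<Sum>k. hankel u (h2_truncate N b) k * cnj (a k))"
  proof (rule suminf_cong)
    fix k
    have "hankel u (h2_truncate N b) k = (\<Sum>n<N. u (k + n) * cnj (b n))"
      unfolding hankel_def h2_truncate_def by (subst suminf_finite[of "{..<N}"]) auto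
    then show "(\<Sum>n<N. u (n + k) * cnj (a k) * cnj (b n)) = hankel u (h2_truncate N b) k * cnj (a k)"
      by (simp add: sum_distrib_left sum_distrib_right mult_ac add.commute)
  qed
  finally show ?thesis unfolding h2_inner_def .
qed

lemma tendsto_h2_inner_hankel:
  assumes u: "u \<in> BMOA" and a: "a \<in> H2" and b: "b \<in> H2" and bs: "\<And>N. bs N \<in> H2"
    and lim: "(\<lambda>N. h2_norm2 (\<lambda>n. b n - bs N n)) \<longlonglongrightarrow> 0"
  shows "(\<lambda>N. h2_inner (hankel u (bs N)) a) \<longlonglongrightarrow> h2_inner (hankel u b) a"
proof -
  obtain C where C: "\<forall>f\<in>H2. h2_norm2 (hankel u f) \<le> C * h2_norm2 f"
    using BMOA_hankel_bounded[OF u] by blast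
  define d where "d N = h2_inner (hankel u b) a - h2_inner (hankel u (bs N)) a" for N
  have bound: "norm (d N) \<le> sqrt (C * h2_norm2 (\<lambda>n. b n - bs N n) * h2_norm2 a)" for N
  proof -
    have bd: "(\<lambda>n. b n - bs N n) \<in> H2" using H2_diff[OF b bs] .
    have "d N = h2_inner (hankel u (\<lambda>n. b n - bs N n)) a"
      unfolding d_def hankel_diff[OF BMOA_H2[OF u] b bs]
      by (intro h2_inner_diff_left[symmetric] BMOA_hankel_H2 u b bs a)
    then have "(cmod (d N))\<^sup>2 \<le> h2_norm2 (hankel u (\<lambda>n. b n - bs N n)) * h2_norm2 a"
      using h2_inner_Cauchy_Schwarz[OF BMOA_hankel_H2[OF u bd] a] by simp
    also have "\<dots> \<le> C * h2_norm2 (\<lambda>n. b n - bs N n) * h2_norm2 a"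
      using C bd by (intro mult_right_mono h2_norm2_nonneg a) auto
    finally show ?thesis by (simp add: real_le_rsqrt)
  qed
  have bound_0: "(\<lambda>N. sqrt (C * h2_norm2 (\<lambda>n. b n - bs N n) * h2_norm2 a)) \<longlonglongrightarrow> 0"
    using tendsto_real_sqrt[OF tendsto_mult[OF tendsto_mult[OF tendsto_const lim] tendsto_const]]
    by simp
  have "d \<longlonglongrightarrow> 0"
    by (rule Lim_null_comparison[OF always_eventually bound_0]) (use bound in blast)
  then have "(\<lambda>N. h2_inner (hankel u b) a - d N) \<longlonglongrightarrow> h2_inner (hankel u b) a - 0"
    by (intro tendsto_diff tendsto_const)
  then show ?thesis by (simp add: d_def)
qed

text \<open>The double series behind (H_u a, b) need not converge absolutely, so its order of
  summation cannot simply be swapped: symmetry is proved for truncated b and extended by the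
  boundedness of H_u.\<close>

lemma hankel_inner_commute:
  assumes u: "u \<in> BMOA" and a: "a \<in> H2" and b: "b \<in> H2"
  shows "h2_inner (hankel u a) b = h2_inner (hankel u b) a"
proof (rule LIMSEQ_unique)
  show "(\<lambda>N. h2_inner (hankel u a) (h2_truncate N b)) \<longlonglongrightarrow> h2_inner (hankel u a) b"
    unfolding h2_inner_truncate unfolding h2_inner_def
    by (intro summable_LIMSEQ H2_summable_mult_cnj BMOA_hankel_H2 u a b)
  show "(\<lambda>N. h2_inner (hankel u a) (h2_truncate N b)) \<longlonglongrightarrow> h2_inner (hankel u b) a"
    unfolding h2_inner_hankel_truncate[OF BMOA_H2[OF u] a]
    by (intro tendsto_h2_inner_hankel u a b H2_truncate h2_norm2_truncate_tendsto_0)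
qed

lemma hankel_hankel_eq:
  assumes u: "u \<in> H2" and f: "f \<in> H2" and hf: "hankel u f \<in> H2"
  shows "hankel u (hankel u f) n = h2_inner f u * u n + shifted_hankel u (shifted_hankel u f) n"
proof -
  define g where "g k = u (n + k) * cnj (hankel u f k)" for k
  have "shifted_hankel u (shifted_hankel u f) n = (\<Sum>k. g (Suc k))"
    by (simp add: shifted_hankel_apply hankel_def[of u "shifted_hankel u f"] g_def)
  also have "\<dots> = suminf g - g 0"
    using suminf_split_head[of g] hankel_summable[OF u hf, of n] unfolding g_def by simp
  also have "g 0 = u n * h2_inner f u"
    using cnj_hankel_0[OF u f] by (simp add: g_def)
  finally show ?thesis unfolding g_def hankel_def[of u "hankel u f"] by simp
qed

section \<open>The eigenspaces E_H(s) and E_K(s)\<close>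

lemma E_K_eq_E_H_shift_adj: "E_K u s = E_H (shift_adj u) s"
  unfolding E_K_def E_H_def shifted_hankel_def ..

lemma zero_in_E_H: "(\<lambda>n. 0) \<in> E_H u s"
  unfolding E_H_def using H2_zero by (simp add: hankel_zero)

lemma zero_in_E_K: "(\<lambda>n. 0) \<in> E_K u s"
  unfolding E_K_eq_E_H_shift_adj by (rule zero_in_E_H)

lemma hankel_in_E_H:
  assumes u: "u \<in> BMOA" and f: "f \<in> E_H u s"
  shows "hankel u f \<in> E_H u s"
proof -
  have fH: "f \<in> H2" and e: "hankel u (hankel u f) = (\<lambda>n. complex_of_real (s\<^sup>2) * f n)"
    using f unfolding E_H_def by auto
  have "hankel u (hankel u (hankel u f)) = (\<lambda>n. complex_of_real (s\<^sup>2) * hankel u f n)"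
    unfolding e hankel_mult[OF BMOA_H2[OF u] fH] by simp
  then show ?thesis unfolding E_H_def using BMOA_hankel_H2[OF u fH] by simp
qed

lemma mult_in_E_H:
  assumes u: "u \<in> BMOA" and f: "f \<in> E_H u s"
  shows "(\<lambda>n. c * f n) \<in> E_H u s"
proof -
  have fH: "f \<in> H2" and e: "hankel u (hankel u f) = (\<lambda>n. complex_of_real (s\<^sup>2) * f n)"
    using f unfolding E_H_def by auto
  have "hankel u (hankel u (\<lambda>n. c * f n)) = (\<lambda>n. c * hankel u (hankel u f) n)"
    by (simp add: hankel_mult[OF BMOA_H2[OF u] fH] hankel_mult[OF BMOA_H2[OF u] BMOA_hankel_H2[OF u fH]])
  also have "\<dots> = (\<lambda>n. complex_of_real (s\<^sup>2) * (c * f n))"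
    by (simp add: e mult_ac)
  finally show ?thesis unfolding E_H_def using H2_mult[OF fH] by simp
qed

lemma E_H_inter_orth_compl:
  assumes u: "u \<in> BMOA"
  shows "E_H u s \<inter> orth_compl u = E_K u s \<inter> orth_compl u"
proof -
  have "hankel u (hankel u f) = shifted_hankel u (shifted_hankel u f)"
    if f: "f \<in> H2" and orth: "h2_inner f u = 0" for f
    using hankel_hankel_eq[OF BMOA_H2[OF u] f BMOA_hankel_H2[OF u f]] orth by (simp add: fun_eq_iff)
  then show ?thesis
    unfolding E_H_def E_K_def orth_compl_def by auto
qed

lemma h2_inner_E_H_E_K:
  assumes u: "u \<in> BMOA" and f: "f \<in> E_H u s" and g: "g \<in> E_K u s"
  shows "h2_inner f u * cnj (h2_inner g u) = 0"
proof -
  define v where "v = shift_adj u"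
  have v: "v \<in> BMOA" unfolding v_def by (rule shift_adj_BMOA[OF u])
  have uH: "u \<in> H2" using BMOA_H2[OF u] .
  have fH: "f \<in> H2" and ef: "hankel u (hankel u f) = (\<lambda>n. complex_of_real (s\<^sup>2) * f n)"
    using f unfolding E_H_def by auto
  have gH: "g \<in> H2" and eg: "hankel v (hankel v g) = (\<lambda>n. complex_of_real (s\<^sup>2) * g n)"
    using g unfolding E_K_eq_E_H_shift_adj E_H_def v_def by auto
  have hvf: "hankel v f \<in> H2" and hvg: "hankel v g \<in> H2"
    using BMOA_hankel_H2[OF v] fH gH by auto
  have "hankel v (hankel v f) = (\<lambda>n. complex_of_real (s\<^sup>2) * f n - h2_inner f u * u n)"
    using hankel_hankel_eq[OF uH fH BMOA_hankel_H2[OF u fH]] ef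
    unfolding shifted_hankel_def v_def by (auto simp: fun_eq_iff algebra_simps)
  then have "h2_inner (hankel v (hankel v f)) g
      = complex_of_real (s\<^sup>2) * h2_inner f g - h2_inner f u * h2_inner u g"
    by (simp add: h2_inner_diff_left H2_mult h2_inner_mult_left fH gH uH)
  moreover have "h2_inner (hankel v (hankel v f)) g = complex_of_real (s\<^sup>2) * h2_inner f g"
  proof -
    have "h2_inner (hankel v (hankel v f)) g = cnj (h2_inner (hankel v f) (hankel v g))"
      using hankel_inner_commute[OF v hvf gH] h2_inner_cnj_commute[OF hvf hvg] by simp
    also have "h2_inner (hankel v f) (hankel v g) = h2_inner (hankel v (hankel v g)) f"
      using hankel_inner_commute[OF v hvg fH] by simp
    finally show ?thesis
      unfolding eg h2_inner_mult_left[OF gH fH] using h2_inner_cnj_commute[OF gH fH] by simp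
  qed
  ultimately have "h2_inner f u * h2_inner u g = 0" by simp
  then show ?thesis using h2_inner_cnj_commute[OF gH uH] by simp
qed

lemma orth_to_E_H_or_E_K: "u \<in> BMOA \<Longrightarrow> orth_to u (E_H u s) \<or> orth_to u (E_K u s)"
  unfolding orth_to_def using h2_inner_E_H_E_K by fastforce

text \<open>The induction runs over the coefficient index, simultaneously for all elements of E_H(s):
  g(0) = s^-2 cnj (H_u g, u), and g = H_u g' with g' in E_H(s), so g(m+1) = (K_u g')(m) with
  K_u g' again in E_H(s).\<close>

lemma E_H_trivial_if_orth_to_both:
  assumes u: "u \<in> BMOA" and s: "s > 0"
    and oH: "orth_to u (E_H u s)" and oK: "orth_to u (E_K u s)"
  shows "E_H u s \<subseteq> {\<lambda>n. 0}"
proof -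
  have orth_H: "f \<in> orth_compl u" if "f \<in> E_H u s" for f
    using oH that unfolding orth_to_def orth_compl_def E_H_def by auto
  have orth_K: "f \<in> orth_compl u" if "f \<in> E_K u s" for f
    using oK that unfolding orth_to_def orth_compl_def E_K_def by auto
  have "\<forall>g \<in> E_H u s. g m = 0" for m
  proof (induction m)
    case 0
    show ?case
    proof
      fix g assume g: "g \<in> E_H u s"
      have gH: "g \<in> H2" and e: "hankel u (hankel u g) = (\<lambda>n. complex_of_real (s\<^sup>2) * g n)"
        using g unfolding E_H_def by auto
      have "cnj (hankel u (hankel u g) 0) = 0"
        using cnj_hankel_0[OF BMOA_H2[OF u] BMOA_hankel_H2[OF u gH]] orth_H[OF hankel_in_E_H[OF u g]]
        unfolding orth_compl_def by simp
      then show "g 0 = 0" using s unfolding e by simp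
    qed
  next
    case (Suc m)
    show ?case
    proof
      fix g assume g: "g \<in> E_H u s"
      have gH: "g \<in> H2" and e: "hankel u (hankel u g) = (\<lambda>n. complex_of_real (s\<^sup>2) * g n)"
        using g unfolding E_H_def by auto
      define g' where "g' = (\<lambda>n. complex_of_real (1 / s\<^sup>2) * hankel u g n)"
      have g'H: "g' \<in> E_H u s"
        unfolding g'_def by (rule mult_in_E_H[OF u hankel_in_E_H[OF u g]])
      have hg': "hankel u g' = g"
        unfolding g'_def hankel_mult[OF BMOA_H2[OF u] BMOA_hankel_H2[OF u gH]] e using s by auto
      have "g' \<in> E_K u s"
        using E_H_inter_orth_compl[OF u] g'H orth_H[OF g'H] by blast
      then have "shifted_hankel u g' \<in> E_K u s"
        using hankel_in_E_H[OF shift_adj_BMOA[OF u]]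
        unfolding E_K_eq_E_H_shift_adj shifted_hankel_def by blast
      then have "shifted_hankel u g' \<in> E_H u s"
        using E_H_inter_orth_compl[OF u] orth_K by blast
      then have "shifted_hankel u g' m = 0"
        using Suc.IH by blast
      then show "g (Suc m) = 0"
        unfolding shifted_hankel_apply hg' .
    qed
  qed
  then show ?thesis by auto
qed

lemma orth_to_iff_subset_orth_compl: "E \<subseteq> H2 \<Longrightarrow> orth_to u E \<longleftrightarrow> E \<subseteq> orth_compl u"
  unfolding orth_to_def orth_compl_def by auto

theorem mainTheorem4:
  fixes u :: "nat \<Rightarrow> complex" and s :: real
  assumes "u \<in> BMOA" and "s > 0"
    and "{(\<lambda>n. f n + g n) | f g. f \<in> E_H u s \<and> g \<in> E_K u s} \<noteq> {(\<lambda>n. 0)}"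
  shows "(\<not> orth_to u (E_H u s) \<and> E_K u s = E_H u s \<inter> orth_compl u) \<noteq>
         (\<not> orth_to u (E_K u s) \<and> E_H u s = E_K u s \<inter> orth_compl u)"
proof -
  have common: "E_H u s \<inter> orth_compl u = E_K u s \<inter> orth_compl u"
    using E_H_inter_orth_compl[OF assms(1)] .
  have "E_H u s \<subseteq> H2" "E_K u s \<subseteq> H2"
    unfolding E_H_def E_K_def by auto
  then have H_iff: "E_H u s = E_K u s \<inter> orth_compl u \<longleftrightarrow> orth_to u (E_H u s)"
    and K_iff: "E_K u s = E_H u s \<inter> orth_compl u \<longleftrightarrow> orth_to u (E_K u s)"
    using common orth_to_iff_subset_orth_compl by blast+
  have "\<not> (orth_to u (E_H u s) \<and> orth_to u (E_K u s))"
  proof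
    assume both: "orth_to u (E_H u s) \<and> orth_to u (E_K u s)"
    then have "E_H u s \<subseteq> {\<lambda>n. 0}"
      using E_H_trivial_if_orth_to_both[OF assms(1,2)] by blast
    moreover have "E_K u s \<subseteq> E_H u s"
      using both K_iff by blast
    ultimately have "E_H u s = {\<lambda>n. 0}" "E_K u s = {\<lambda>n. 0}"
      using zero_in_E_H zero_in_E_K by blast+
    then show False using assms(3) by simp
  qed
  then show ?thesis
    using orth_to_E_H_or_E_K[OF assms(1)] H_iff K_iff by blast
qed

end
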